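(* For relatively prime integers $r, s$ put $u = r^2 + s^2$, $v = 2r^2 - s^2$ and $A = uv(u^2 - v^2) = -3r^2(r^2+s^2)(r^2-2s^2)(2r^2-s^2)$. Then for all but finitely many pairs $(r,s)$ of relatively prime integers with $r \neq 0$, the eight rational numbers \[ 1,\ -1,\ A,\ -A,\ uv,\ -uv,\ u^2 - v^2,\ -(u^2-v^2) \] represent eight pairwise distinct classes in $\mathbb{Q}^\times/(\mathbb{Q}^\times)^2$.
   Context: $\mathbb{Q}^\times/(\mathbb{Q}^\times)^2$ denotes the group of nonzero rationals modulo nonzero squares; two nonzero rationals represent the same class iff their quotient is a square of a rational. *)

theory Defs
  imports Complex_Main
begin

definition same_sq_class :: "rat \<Rightarrow> rat \<Rightarrow> bool" where
  "same_sq_class a b \<longleftrightarrow> a \<noteq> 0 \<and> b \<noteq> 0 \<and> (\<exists>q::rat. a / b = q ^ 2)"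

definition sq_u :: "int \<Rightarrow> int \<Rightarrow> int" where "sq_u r s = r^2 + s^2"
definition sq_v :: "int \<Rightarrow> int \<Rightarrow> int" where "sq_v r s = 2 * r^2 - s^2"
definition sq_A :: "int \<Rightarrow> int \<Rightarrow> int" where
  "sq_A r s = sq_u r s * sq_v r s * ((sq_u r s)^2 - (sq_v r s)^2)"

definition eight_list :: "int \<Rightarrow> int \<Rightarrow> rat list" where
  "eight_list r s = (let u = sq_u r s; v = sq_v r s; A = sq_A r s in
     map rat_of_int [1, -1, A, -A, u*v, -(u*v), u^2 - v^2, -(u^2 - v^2)])"

definition eight_distinct_classes :: "int \<Rightarrow> int \<Rightarrow> bool" where
  "eight_distinct_classes r s \<longleftrightarrow>
     (\<forall>i<8. eight_list r s ! i \<noteq> 0) \<and>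
     (\<forall>i<8. \<forall>j<8. i \<noteq> j \<longrightarrow> \<not> same_sq_class (eight_list r s ! i) (eight_list r s ! j))"

end

theory Submission
  imports Defs "HOL-Computational_Algebra.Nth_Powers"
begin

text \<open>Put \<open>w = 3(2s\<^sup>2 - r\<^sup>2)\<close>, so that \<open>u\<^sup>2 - v\<^sup>2 = r\<^sup>2 w\<close> and \<open>A = r\<^sup>2 w uv\<close>. Modulo squares the
  eight numbers are then the products of subsets of \<open>{-1, uv, w}\<close>, and they are pairwise distinct
  as soon as none of \<open>\<plusminus>uv, \<plusminus>w, \<plusminus>w uv\<close> is a square. For \<open>\<plusminus>w\<close> this is seen modulo 3, since
  \<open>3 | r\<^sup>2 + s\<^sup>2\<close> forces \<open>3 | r\<close> and \<open>3 | s\<close>. The others are \<open>2\<close> or \<open>3\<close> modulo 4, depending on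
  the parities of \<open>r\<close> and \<open>s\<close>, except \<open>-uv = (r\<^sup>2 + s\<^sup>2)(s\<^sup>2 - 2r\<^sup>2)\<close> for even \<open>r\<close>. There
  both coprime factors would be squares, and parametrising \<open>s\<^sup>2 - 2r\<^sup>2 = b\<^sup>2\<close> turns
  \<open>r\<^sup>2 + s\<^sup>2 = a\<^sup>2\<close> into a solution of \<open>(2mn)\<^sup>2 + (n\<^sup>2 + 2m\<^sup>2)\<^sup>2 = c\<^sup>2\<close>, which admits an
  infinite descent on \<open>|m|\<close>. So the exceptional set is in fact empty.\<close>

section \<open>Squares and coprime factorisations of integers\<close>

lemma coprime_mult_eq_power_int:
  fixes x y z :: int
  assumes "coprime x y" "x > 0" "y > 0" "x * y = z ^ k"
  obtains a b where "x = a ^ k" "y = b ^ k"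
proof -
  have coprime_nat: "coprime (nat x) (nat y)"
    using assms by (simp add: coprime_int_iff [symmetric])
  have "x * y = \<bar>z\<bar> ^ k"
    using assms by (metis abs_of_pos mult_pos_pos power_abs)
  then have "int (nat x * nat y) = int (nat \<bar>z\<bar> ^ k)"
    using assms by simp
  then have "is_nth_power k (nat x * nat y)"
    by (simp only: of_nat_eq_iff) auto
  then have "is_nth_power k (nat x)" "is_nth_power k (nat y)"
    using is_nth_power_mult_coprime_natD [OF coprime_nat] assms by auto
  then obtain a b where "nat x = a ^ k" "nat y = b ^ k"
    unfolding is_nth_power_def by blast
  with assms show thesis
    using that [of "int a" "int b"] by (metis of_nat_power int_nat_eq less_le_not_le)
qed

lemma is_square_of_int_ratD:
  assumes "is_square (of_int n :: rat)"
  shows "is_square n"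
proof -
  obtain q :: rat where "of_int n = q ^ 2"
    using assms unfolding is_nth_power_def by blast
  moreover obtain a b where q: "q = of_int a / of_int b" and "b > 0" "coprime a b"
    by (cases q) (auto simp: Fract_of_int_quotient)
  ultimately have "of_int (n * b ^ 2) = (of_int (a ^ 2) :: rat)"
    by (simp add: power_divide)
  then have n: "n * b ^ 2 = a ^ 2"
    by (simp only: of_int_eq_iff)
  then have "b dvd a ^ 2"
    by (metis dvd_triv_right power2_eq_square dvd_mult_left)
  moreover have "coprime b (a ^ 2)"
    using \<open>coprime a b\<close> by (simp add: coprime_commute)
  ultimately have "is_unit b"
    by (meson coprime_absorb_left)
  with \<open>b > 0\<close> n show ?thesis
    by auto
qed

lemma square_mod_4: "(t::int)^2 mod 4 = 0 \<or> t^2 mod 4 = 1"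
proof (cases "even t")
  case True
  then show ?thesis by (auto simp: power2_eq_square)
next
  case False
  then obtain k where "t = 2*k + 1" by (blast elim: oddE)
  then have "t^2 = 4*(k^2 + k) + 1" by (simp add: power2_eq_square algebra_simps)
  then show ?thesis by presburger
qed

lemma odd_square_mod_8:
  assumes "odd (x::int)"
  obtains j where "x^2 = 8*j + 1"
proof -
  obtain k where k: "x = 2*k + 1"
    using assms by (blast elim: oddE)
  obtain j where "k * (k + 1) = 2*j"
    by (metis dvd_def even_mult_iff odd_even_add odd_one)
  then have "x^2 = 8*j + 1"
    by (simp add: k power2_eq_square algebra_simps)
  then show thesis ..
qed

lemma not_square_if_mod_4_eq_3: "(x::int) mod 4 = 3 \<Longrightarrow> \<not> is_square x"
proof
  assume "x mod 4 = 3" "is_square x"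
  then obtain t where "x = t^2" "x mod 4 = 3"
    by (auto elim: is_nth_powerE)
  with square_mod_4 [of t] show False by simp
qed

lemma twice_odd_not_square:
  assumes "odd (k::int)"
  shows "\<not> is_square (2 * k)"
proof
  assume "is_square (2 * k)"
  then obtain t where t: "2 * k = t^2"
    by (auto elim: is_nth_powerE)
  then have "even t" by (metis dvd_triv_left even_power)
  then have "4 dvd 2 * k"
    by (auto simp: t power2_eq_square)
  with assms show False by presburger
qed

lemma coprime_imp_not_three_dvd_sum_squares:
  assumes "coprime (x::int) y"
  shows "\<not> 3 dvd x^2 + y^2"
proof
  have square_mod_3: "z^2 mod 3 = (if 3 dvd z then 0 else 1)" for z :: int
  proof -
    have "z mod 3 = 0 \<or> z mod 3 = 1 \<or> z mod 3 = 2" by presburger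
    moreover have "z^2 mod 3 = (z mod 3) * (z mod 3) mod 3"
      by (simp add: power2_eq_square mod_mult_eq)
    ultimately show ?thesis by auto
  qed
  assume "3 dvd x^2 + y^2"
  then have "(x^2 mod 3 + y^2 mod 3) mod 3 = 0"
    by (simp add: mod_add_eq)
  then have "3 dvd x" "3 dvd y"
    by (auto simp: square_mod_3 split: if_splits)
  then have "is_unit (3::int)"
    using coprime_common_divisor [OF assms] by blast
  then show False by simp
qed

lemma odd_if_coprime_even:
  fixes r s :: int
  assumes "coprime r s" "even r"
  shows "odd s"
proof
  assume "even s"
  with assms have "is_unit (2::int)"
    by (metis coprime_common_divisor)
  then show False by simp
qed

lemma coprime_if_no_common_prime_divisor:
  fixes a b :: int
  assumes "\<And>p. prime p \<Longrightarrow> p dvd a \<Longrightarrow> p dvd b \<Longrightarrow> False"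
  shows "coprime a b"
proof (rule ccontr)
  assume "\<not> coprime a b"
  then have "\<not> is_unit (gcd a b)"
    by (simp add: coprime_iff_gcd_eq_1)
  moreover have "gcd a b \<noteq> 0"
    using assms [of 2] by auto
  ultimately
  obtain p where "prime p" "p dvd gcd a b"
    using prime_divisor_exists by blast
  with assms show False by auto
qed

section \<open>An infinite descent\<close>

lemma coprime_mult_eq_twice_square:
  fixes A B l :: int
  assumes "coprime A B" "A > 0" "B > 0" "A * B = 2 * l^2"
  obtains m n where "A + B = 2*m^2 + n^2" "A * B = 2*m^2*n^2" "coprime m n" "m \<noteq> 0"
proof -
  have split: "\<exists>m n. A + B = 2*m^2 + n^2 \<and> A * B = 2*m^2*n^2 \<and> coprime m n \<and> m \<noteq> 0"
    if "coprime A B" "A > 0" "B > 0" "A * B = 2 * l^2" "even A" for A B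
  proof -
    from \<open>even A\<close> obtain A' where A: "A = 2 * A'" by blast
    with that have "coprime A' B" "A' > 0" "A' * B = l^2" by auto
    then obtain m n where "A' = m^2" "B = n^2"
      using \<open>B > 0\<close> coprime_mult_eq_power_int by metis
    with A \<open>coprime A' B\<close> \<open>A' > 0\<close> show ?thesis by auto
  qed
  from assms(4) have "even A \<or> even B" by (metis dvd_triv_left even_mult_iff)
  then show thesis
    using split [OF assms] split [of B A] assms that by (auto simp: ac_simps)
qed

lemma diff_twice_square_eq_square_param:
  fixes a b d :: int
  assumes "odd a" "coprime a d" "d \<noteq> 0" "a^2 - 2*d^2 = b^2"
  obtains m n where "m \<noteq> 0" "odd n" "coprime m n" "d^2 = (2*m*n)^2" "a^2 = (n^2 + 2*m^2)^2"
proof -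
  define a' b' where "a' = \<bar>a\<bar>" and "b' = \<bar>b\<bar>"
  have eq: "a'^2 - 2*d^2 = b'^2" and "odd a'" "b' \<ge> 0"
    using assms by (simp_all add: a'_def b'_def)
  have "b'^2 < a'^2"
    using eq \<open>d \<noteq> 0\<close> zero_less_power2 [of d] by linarith
  then have "b' < a'"
    by (rule power_less_imp_less_base) (simp add: a'_def)
  have "odd (a'^2 - 2*d^2)"
    using \<open>odd a'\<close> by simp
  then have "odd b'"
    using eq by simp
  with \<open>odd a'\<close> have "even (a' - b')" "even (a' + b')"
    by simp_all
  then obtain P Q where P: "a' - b' = 2*P" and Q: "a' + b' = 2*Q"
    by (meson evenE)
  with \<open>b' < a'\<close> \<open>b' \<ge> 0\<close> have "P > 0" "Q > 0"
    by linarith+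
  have "a' = P + Q"
    using P Q by linarith
  have "4*(P*Q) = (a' - b') * (a' + b')"
    using P Q by simp
  also have "\<dots> = a'^2 - b'^2"
    by (simp add: power2_eq_square algebra_simps)
  finally have d2: "d^2 = 2*(P*Q)"
    using eq by linarith
  then have "even d"
    by (metis dvd_triv_left even_power pos2)
  then obtain e where "d = 2*e" ..
  have "coprime P Q"
  proof (rule coprime_if_no_common_prime_divisor)
    fix p assume p: "prime p" "p dvd P" "p dvd Q"
    then have "p dvd P + Q"
      by simp
    then have "p dvd a"
      using \<open>a' = P + Q\<close> by (metis a'_def dvd_abs_iff)
    moreover have "p dvd d^2"
      using p d2 by simp
    then have "p dvd d"
      using p(1) prime_dvd_power by blast
    ultimately show False
      using p \<open>coprime a d\<close> by (meson coprime_common_divisor not_prime_unit)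
  qed
  moreover have "P * Q = 2*e^2"
    using d2 \<open>d = 2*e\<close> by (simp add: power_mult_distrib)
  ultimately obtain m n where mn: "P + Q = 2*m^2 + n^2" "P * Q = 2*m^2*n^2" "coprime m n" "m \<noteq> 0"
    using \<open>P > 0\<close> \<open>Q > 0\<close> coprime_mult_eq_twice_square by metis
  with \<open>a' = P + Q\<close> \<open>odd a'\<close> have "odd n"
    by auto
  moreover have "d^2 = (2*m*n)^2"
    using d2 mn by (simp add: power_mult_distrib)
  moreover have "a^2 = (n^2 + 2*m^2)^2"
    using \<open>a' = P + Q\<close> mn by (metis a'_def power2_abs add.commute)
  ultimately show thesis
    using that mn by blast
qed

text \<open>Solutions arise from \<open>r\<^sup>2 + s\<^sup>2 = c\<^sup>2\<close>, \<open>s\<^sup>2 - 2r\<^sup>2 = b\<^sup>2\<close> with \<open>r = 2mn\<close>,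
  \<open>s = \<plusminus>(n\<^sup>2 + 2m\<^sup>2)\<close>.\<close>
definition quartic_solution :: "int \<Rightarrow> int \<Rightarrow> int \<Rightarrow> bool" where
  "quartic_solution m n c \<longleftrightarrow>
     m \<noteq> 0 \<and> odd n \<and> coprime m n \<and> (2*m*n)^2 + (n^2 + 2*m^2)^2 = c^2"

lemma coprime_mult_eq_three_fourth_power:
  fixes X Y n :: int
  assumes "coprime X Y" "X > 0" "Y > 0" "X * Y = 3 * n^4"
  obtains \<alpha> \<beta> where "X + Y = 3*\<alpha>^4 + \<beta>^4" "coprime \<alpha> \<beta>" "(\<alpha>*\<beta>)^4 = n^4"
proof -
  have split: "\<exists>\<alpha> \<beta>. X + Y = 3*\<alpha>^4 + \<beta>^4 \<and> coprime \<alpha> \<beta> \<and> (\<alpha>*\<beta>)^4 = n^4"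
    if "coprime X Y" "X > 0" "Y > 0" "X * Y = 3 * n^4" "3 dvd X" for X Y
  proof -
    from \<open>3 dvd X\<close> obtain G where G: "X = 3 * G" by blast
    with that have "coprime G Y" "G > 0" "G * Y = n^4" by auto
    then obtain \<alpha> \<beta> where "G = \<alpha>^4" "Y = \<beta>^4"
      using \<open>Y > 0\<close> coprime_mult_eq_power_int by metis
    with G \<open>coprime G Y\<close> \<open>G * Y = n^4\<close> show ?thesis
      by (auto simp: power_mult_distrib)
  qed
  have "3 dvd X * Y"
    using assms(4) by simp
  then have "3 dvd X \<or> 3 dvd Y"
    by (simp add: prime_dvd_mult_iff)
  then show thesis
    using split [OF assms] split [of Y X] assms that by (auto simp: ac_simps)
qed

lemma coprime_quartic_factors:
  fixes m n a :: int
  defines "F1 \<equiv> 2*m^2 + 2*n^2 - a" and "F2 \<equiv> 2*m^2 + 2*n^2 + a"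
  assumes "coprime m n" "odd F1" and F12: "F1 * F2 = 3*n^4"
  shows "coprime F1 F2"
proof (rule coprime_if_no_common_prime_divisor)
  fix p assume p: "prime p" "p dvd F1" "p dvd F2"
  have "coprime F1 2"
    using \<open>odd F1\<close> by simp
  then have "\<not> p dvd 2"
    using p by (meson coprime_common_divisor not_prime_unit)
  have "p dvd F1 + F2"
    using p by simp
  also have "F1 + F2 = 2*(2*(m^2 + n^2))"
    by (simp add: F1_def F2_def)
  finally have mn: "p dvd m^2 + n^2"
    using \<open>\<not> p dvd 2\<close> prime_dvd_mult_iff [OF p(1), of 2] by blast
  have "p dvd F1 * F2"
    using p by simp
  then have "p dvd 3 \<or> p dvd n"
    using p(1) F12 by (simp add: prime_dvd_mult_iff prime_dvd_power_iff)
  then show False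
  proof
    assume "p dvd 3"
    then have "p = 3"
      using p(1) by (simp add: primes_dvd_imp_eq)
    then show False
      using mn coprime_imp_not_three_dvd_sum_squares [OF \<open>coprime m n\<close>] by simp
  next
    assume "p dvd n"
    then have "p dvd n^2"
      by (simp add: power2_eq_square)
    then have "p dvd m^2"
      using mn by (simp add: dvd_add_left_iff)
    then have "p dvd m"
      using p(1) prime_dvd_power by blast
    then show False
      using \<open>p dvd n\<close> \<open>coprime m n\<close> p(1) by (meson coprime_common_divisor not_prime_unit)
  qed
qed

lemma quartic_solution_factor:
  assumes "quartic_solution m n c"
  obtains \<alpha> \<beta> where "coprime \<alpha> \<beta>" "n^2 = \<alpha>^2 * \<beta>^2" "3*\<alpha>^4 + \<beta>^4 = 4*m^2 + 4*n^2"
proof -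
  have "odd n" and "coprime m n" and eq: "(2*m*n)^2 + (n^2 + 2*m^2)^2 = \<bar>c\<bar>^2"
    using assms by (simp_all add: quartic_solution_def)
  define F1 F2 where "F1 = 2*m^2 + 2*n^2 - \<bar>c\<bar>" and "F2 = 2*m^2 + 2*n^2 + \<bar>c\<bar>"
  have "F1 * F2 = (2*m^2 + 2*n^2)^2 - \<bar>c\<bar>^2"
    by (simp add: F1_def F2_def power2_eq_square algebra_simps)
  also have "\<dots> = 3*n^4"
    unfolding eq [symmetric] by algebra
  finally have F12: "F1 * F2 = 3*n^4" .
  have "n \<noteq> 0"
    using \<open>odd n\<close> by auto
  then have "F2 > 0"
    unfolding F2_def by (simp add: add_nonneg_pos add_pos_nonneg)
  moreover have "F1 * F2 > 0"
    using F12 \<open>n \<noteq> 0\<close> by simp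
  ultimately have "F1 > 0"
    by (simp add: zero_less_mult_iff)
  have "odd (\<bar>c\<bar>^2)"
    using eq [symmetric] \<open>odd n\<close> by simp
  then have "odd F1"
    by (simp add: F1_def)
  have "coprime F1 F2"
    using \<open>coprime m n\<close> \<open>odd F1\<close> F12 unfolding F1_def F2_def by (rule coprime_quartic_factors)
  then obtain \<alpha> \<beta> where sum: "F1 + F2 = 3*\<alpha>^4 + \<beta>^4" and "coprime \<alpha> \<beta>" and "(\<alpha>*\<beta>)^4 = n^4"
    using \<open>F1 > 0\<close> \<open>F2 > 0\<close> F12 by (rule coprime_mult_eq_three_fourth_power)
  then have "((\<alpha>*\<beta>)^2)^2 = (n^2)^2"
    by (simp add: power_mult [symmetric])
  then have "(\<alpha>*\<beta>)^2 = n^2"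
    by (metis power2_eq_iff_nonneg zero_le_power2)
  then have "n^2 = \<alpha>^2 * \<beta>^2"
    by (simp add: power_mult_distrib)
  moreover have "3*\<alpha>^4 + \<beta>^4 = 4*m^2 + 4*n^2"
    using sum by (simp add: F1_def F2_def)
  ultimately show thesis
    using that \<open>coprime \<alpha> \<beta>\<close> by blast
qed

lemma quartic_descent_squares:
  fixes \<alpha> \<beta> m :: int
  assumes "coprime \<alpha> \<beta>" "odd \<alpha>" "odd \<beta>" "m \<noteq> 0"
    and m: "4*m^2 = (3*\<alpha>^2 - \<beta>^2) * (\<alpha>^2 - \<beta>^2)"
  obtains c d where "d \<noteq> 0" "\<alpha>^2 - 2*d^2 = \<beta>^2" "d^2 + \<alpha>^2 = c^2" "m^2 = c^2 * d^2"
proof -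
  obtain i j where i: "\<alpha>^2 = 8*i + 1" and j: "\<beta>^2 = 8*j + 1"
    using \<open>odd \<alpha>\<close> \<open>odd \<beta>\<close> by (metis odd_square_mod_8)
  define Y where "Y = i - j"
  define X where "X = \<alpha>^2 + 4*Y"
  have Y: "\<alpha>^2 - \<beta>^2 = 8*Y"
    using i j by (simp add: Y_def)
  then have "3*\<alpha>^2 - \<beta>^2 = 2*X"
    by (simp add: X_def)
  with m Y have mXY: "m^2 = X * (4*Y)"
    by simp
  have "coprime X (4*Y)"
  proof (rule coprime_if_no_common_prime_divisor)
    fix p assume p: "prime p" "p dvd X" "p dvd 4*Y"
    then have "p dvd \<alpha>^2"
      by (metis X_def add_diff_cancel_right' dvd_diff)
    then have "p dvd \<alpha>^2 - 2*(4*Y)"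
      using dvd_mult [OF p(3), of 2] by (rule dvd_diff)
    then have "p dvd \<beta>^2"
      using Y by (simp add: algebra_simps)
    with \<open>p dvd \<alpha>^2\<close> have "p dvd \<alpha>" "p dvd \<beta>"
      using p(1) prime_dvd_power by blast+
    with p(1) \<open>coprime \<alpha> \<beta>\<close> show False
      by (meson coprime_common_divisor not_prime_unit)
  qed
  have "X * (4*Y) > 0"
    unfolding mXY [symmetric] using \<open>m \<noteq> 0\<close> by simp
  have "X > 0"
  proof (rule ccontr)
    assume "\<not> X > 0"
    with \<open>X * (4*Y) > 0\<close> have "-X > 0" "-(4*Y) > 0"
      by (auto simp: zero_less_mult_iff)
    moreover have "coprime (-X) (-(4*Y))" "(-X) * (-(4*Y)) = m^2"
      using \<open>coprime X (4*Y)\<close> mXY by simp_all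
    ultimately obtain c where "-X = c^2"
      using coprime_mult_eq_power_int by metis
    then have "\<alpha>^2 + c^2 = 4 * (-Y)"
      by (simp add: X_def)
    with i square_mod_4 [of c] show False
      by presburger
  qed
  with \<open>X * (4*Y) > 0\<close> have "4*Y > 0"
    by (simp add: zero_less_mult_iff)
  with \<open>X > 0\<close> \<open>coprime X (4*Y)\<close> mXY obtain c d where "X = c^2" "4*Y = d^2"
    using coprime_mult_eq_power_int by metis
  with Y \<open>4*Y > 0\<close> mXY show thesis
    by (intro that [of d c]) (auto simp: X_def)
qed

lemma quartic_solution_descent:
  assumes "quartic_solution m n c"
  obtains m' n' c' where "quartic_solution m' n' c'" "\<bar>m'\<bar> < \<bar>m\<bar>"
proof -
  obtain \<alpha> \<beta> where "coprime \<alpha> \<beta>" and n: "n^2 = \<alpha>^2 * \<beta>^2"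
    and sum: "3*\<alpha>^4 + \<beta>^4 = 4*m^2 + 4*n^2"
    using assms by (rule quartic_solution_factor)
  have "odd n" "m \<noteq> 0"
    using assms by (simp_all add: quartic_solution_def)
  then have "odd (\<alpha>^2 * \<beta>^2)"
    by (simp add: n [symmetric])
  then have "odd \<alpha>" "odd \<beta>"
    by simp_all
  have "(3*\<alpha>^2 - \<beta>^2) * (\<alpha>^2 - \<beta>^2) = 3*\<alpha>^4 + \<beta>^4 - 4*(\<alpha>^2 * \<beta>^2)"
    by algebra
  with sum n have "4*m^2 = (3*\<alpha>^2 - \<beta>^2) * (\<alpha>^2 - \<beta>^2)"
    by linarith
  with \<open>coprime \<alpha> \<beta>\<close> \<open>odd \<alpha>\<close> \<open>odd \<beta>\<close> \<open>m \<noteq> 0\<close>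
  obtain c' d where "d \<noteq> 0" and eq: "\<alpha>^2 - 2*d^2 = \<beta>^2"
    and c': "d^2 + \<alpha>^2 = c'^2" and m: "m^2 = c'^2 * d^2"
    by (rule quartic_descent_squares)
  have "coprime \<alpha> d"
  proof (rule coprime_if_no_common_prime_divisor)
    fix p assume p: "prime p" "p dvd \<alpha>" "p dvd d"
    then have "p dvd \<alpha>^2 - 2*d^2"
      by (simp add: power2_eq_square)
    then have "p dvd \<beta>"
      using eq p(1) prime_dvd_power by metis
    with p \<open>coprime \<alpha> \<beta>\<close> show False
      by (meson coprime_common_divisor not_prime_unit)
  qed
  then obtain m' n' where mn: "m' \<noteq> 0" "odd n'" "coprime m' n'"
    and d: "d^2 = (2*m'*n')^2" and \<alpha>: "\<alpha>^2 = (n'^2 + 2*m'^2)^2"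
    using \<open>odd \<alpha>\<close> \<open>d \<noteq> 0\<close> eq by (metis diff_twice_square_eq_square_param)
  have "quartic_solution m' n' c'"
    using mn c' d \<alpha> by (simp add: quartic_solution_def)
  moreover have "m'^2 < m^2"
  proof -
    have "n' \<noteq> 0" "\<alpha> \<noteq> 0"
      using \<open>odd n'\<close> \<open>odd \<alpha>\<close> by auto
    then have "n'^2 > 0" "c'^2 > 0"
      using c' by (simp, metis add_nonneg_pos zero_le_power2 zero_less_power2)
    then have "n'^2 \<ge> 1" "c'^2 \<ge> 1"
      by linarith+
    then have "4*m'^2 * 1 \<le> 4*m'^2 * n'^2" "1 * d^2 \<le> c'^2 * d^2"
      by (intro mult_left_mono mult_right_mono; simp)+
    then have "4*m'^2 \<le> d^2" "d^2 \<le> m^2"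
      by (simp_all add: d m power_mult_distrib)
    moreover have "m'^2 > 0"
      using \<open>m' \<noteq> 0\<close> by simp
    ultimately show ?thesis
      by linarith
  qed
  then have "\<bar>m'\<bar> < \<bar>m\<bar>"
    by (metis abs_le_square_iff not_le)
  ultimately show thesis
    using that by blast
qed

lemma no_quartic_solution: "\<not> quartic_solution m n c"
proof (induction "nat \<bar>m\<bar>" arbitrary: m n c rule: less_induct)
  case less
  show ?case
  proof
    assume "quartic_solution m n c"
    then obtain m' n' c' where "quartic_solution m' n' c'" "\<bar>m'\<bar> < \<bar>m\<bar>"
      by (rule quartic_solution_descent)
    with less show False
      by fastforce
  qed
qed

section \<open>The six integers are not squares\<close>

lemma coprime_sum_squares_diff:
  fixes r s :: int
  assumes "coprime r s"
  shows "coprime (r^2 + s^2) (s^2 - 2*r^2)"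
proof (rule coprime_if_no_common_prime_divisor)
  fix p assume p: "prime p" "p dvd r^2 + s^2" "p dvd s^2 - 2*r^2"
  have "p dvd 3 * r^2"
    using dvd_diff [OF p(2,3)] by simp
  moreover have "p dvd 3 * s^2"
    using dvd_add [OF dvd_mult [OF p(2), of 2] p(3)] by simp
  ultimately have r: "p dvd 3 \<or> p dvd r" and s: "p dvd 3 \<or> p dvd s"
    using p(1) by (simp_all add: prime_dvd_mult_iff prime_dvd_power_iff)
  show False
  proof (cases "p dvd 3")
    case True
    then have "p = 3"
      using p(1) by (simp add: primes_dvd_imp_eq)
    with p(2) coprime_imp_not_three_dvd_sum_squares [OF assms] show False
      by simp
  next
    case False
    with r s p(1) assms show False
      by (meson coprime_common_divisor not_prime_unit)
  qed
qed

lemma neg_uv_not_square: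
  fixes r s :: int
  assumes "coprime r s" "r \<noteq> 0" "even r"
  shows "\<not> is_square ((r^2 + s^2) * (s^2 - 2*r^2))"
proof
  assume "is_square ((r^2 + s^2) * (s^2 - 2*r^2))"
  then obtain t where t: "(r^2 + s^2) * (s^2 - 2*r^2) = t^2"
    unfolding is_nth_power_def by metis
  have "odd s"
    using assms(1,3) by (rule odd_if_coprime_even)
  have "r^2 + s^2 > 0"
    using \<open>r \<noteq> 0\<close> by (simp add: add_pos_nonneg)
  moreover have "odd (s^2 - 2*r^2)"
    using \<open>odd s\<close> by simp
  then have "s^2 - 2*r^2 \<noteq> 0"
    by presburger
  moreover have "(r^2 + s^2) * (s^2 - 2*r^2) \<ge> 0"
    by (simp add: t)
  ultimately have "s^2 - 2*r^2 > 0"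
    by (simp add: zero_le_mult_iff)
  then obtain a b where a: "r^2 + s^2 = a^2" and b: "s^2 - 2*r^2 = b^2"
    using coprime_mult_eq_power_int [OF coprime_sum_squares_diff [OF assms(1)] \<open>r^2 + s^2 > 0\<close>] t
    by metis
  have "coprime s r"
    using assms(1) by (simp add: coprime_commute)
  with \<open>odd s\<close> obtain m n where
    mn: "m \<noteq> 0" "odd n" "coprime m n" "r^2 = (2*m*n)^2" "s^2 = (n^2 + 2*m^2)^2"
    using \<open>r \<noteq> 0\<close> b by (rule diff_twice_square_eq_square_param)
  then have "quartic_solution m n a"
    using a by (simp add: quartic_solution_def)
  with no_quartic_solution show False
    by blast
qed

lemma uv_twice_odd_if_odd:
  fixes r s :: int
  assumes "odd r"
  obtains k where "odd k" "(r^2 + s^2) * (2*r^2 - s^2) = 2*k"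
proof (cases "even s")
  case True
  then obtain b where "s = 2*b" ..
  then have "(r^2 + s^2) * (2*r^2 - s^2) = 2 * ((r^2 + s^2) * (r^2 - 2*b^2))"
    by (simp add: power_mult_distrib algebra_simps)
  moreover have "odd ((r^2 + s^2) * (r^2 - 2*b^2))"
    using assms True by simp
  ultimately show thesis
    using that by blast
next
  case False
  obtain i j where "r^2 = 8*i + 1" "s^2 = 8*j + 1"
    using assms False by (metis odd_square_mod_8)
  then have "r^2 + s^2 = 2 * (4*i + 4*j + 1)"
    by simp
  then have "(r^2 + s^2) * (2*r^2 - s^2) = 2 * ((4*i + 4*j + 1) * (2*r^2 - s^2))"
    by simp
  moreover have "odd ((4*i + 4*j + 1) * (2*r^2 - s^2))"
    using False by simp
  ultimately show thesis
    using that by blast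
qed

lemma diff_twice_odd_if_even:
  fixes r s :: int
  assumes "even r" "odd s"
  obtains k where "odd k" "2*s^2 - r^2 = 2*k"
proof -
  from \<open>even r\<close> obtain a where "r = 2*a" ..
  then have "2*s^2 - r^2 = 2 * (s^2 - 2*a^2)"
    by (simp add: power_mult_distrib)
  moreover have "odd (s^2 - 2*a^2)"
    using \<open>odd s\<close> by simp
  ultimately show thesis
    using that by blast
qed

lemma uv_mod_4_if_even:
  fixes r s :: int
  assumes "even r" "odd s"
  shows "((r^2 + s^2) * (2*r^2 - s^2)) mod 4 = 3"
proof -
  from \<open>even r\<close> obtain a where r: "r = 2*a" ..
  obtain j where s: "s^2 = 8*j + 1"
    using \<open>odd s\<close> by (rule odd_square_mod_8)
  define K where "K = 4*(a^2 + 2*j)*(2*a^2 - 2*j) - (a^2 + 2*j) + (2*a^2 - 2*j) - 1"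
  have "(r^2 + s^2) * (2*r^2 - s^2) = (4*(a^2 + 2*j) + 1) * (4*(2*a^2 - 2*j) - 1)"
    using r s by (simp add: power_mult_distrib algebra_simps)
  also have "\<dots> = 4 * K + 3"
    by (simp add: K_def algebra_simps)
  finally show ?thesis
    by presburger
qed

lemma three_dvd_if_square_three_times:
  fixes k :: int
  assumes "is_square (3*k) \<or> is_square (-(3*k))"
  shows "3 dvd k"
proof -
  obtain t where t: "3*k = t^2 \<or> -(3*k) = t^2"
    using assms unfolding is_nth_power_def by blast
  then have "3 dvd t^2"
    by (metis dvd_minus_iff dvd_triv_left)
  then have "3 dvd t"
    using prime_dvd_power [of 3 t 2] by simp
  then obtain q where "t = 3*q" ..
  with t have "k = 3*q^2 \<or> k = -(3*q^2)"
    by (auto simp: power_mult_distrib)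
  then show ?thesis
    by auto
qed

lemma integer_nonsquares:
  fixes r s :: int
  defines "uv \<equiv> (r^2 + s^2) * (2*r^2 - s^2)" and "w \<equiv> 3*(2*s^2 - r^2)"
  assumes "coprime r s" "r \<noteq> 0"
  shows "\<not> is_square uv" "\<not> is_square (-uv)" "\<not> is_square w" "\<not> is_square (-w)"
    "\<not> is_square (w*uv)" "\<not> is_square (-(w*uv))"
proof -
  show "\<not> is_square w" "\<not> is_square (-w)"
  proof -
    have "\<not> 3 dvd 2*s^2 - r^2"
    proof
      assume "3 dvd 2*s^2 - r^2"
      then have "3 dvd 3*s^2 - (2*s^2 - r^2)"
        by (rule dvd_diff [OF dvd_triv_left])
      with coprime_imp_not_three_dvd_sum_squares [OF \<open>coprime r s\<close>] show False
        by (simp add: add.commute)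
    qed
    then show "\<not> is_square w" "\<not> is_square (-w)"
      unfolding w_def using three_dvd_if_square_three_times by blast+
  qed
  have twice_odd: "\<not> is_square (2*k)" "\<not> is_square (-(2*k))" if "odd k" for k :: int
    using twice_odd_not_square [of k] twice_odd_not_square [of "-k"] that by simp_all
  have "\<not> is_square uv \<and> \<not> is_square (-uv) \<and> \<not> is_square (w*uv) \<and> \<not> is_square (-(w*uv))"
  proof (cases "even r")
    case True
    with \<open>coprime r s\<close> have "odd s"
      by (rule odd_if_coprime_even)
    with True have "uv mod 4 = 3"
      unfolding uv_def by (rule uv_mod_4_if_even)
    moreover from True \<open>odd s\<close> obtain k where "odd k" "w = 2*(3*k)"
      unfolding w_def by (metis diff_twice_odd_if_even mult.left_commute)
    moreover have "-uv = (r^2 + s^2) * (s^2 - 2*r^2)"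
      by (simp add: uv_def algebra_simps)
    ultimately show ?thesis
      using neg_uv_not_square [OF \<open>coprime r s\<close> \<open>r \<noteq> 0\<close> True] not_square_if_mod_4_eq_3
        twice_odd [of "3*k*uv"] by (auto simp: mult.assoc) presburger+
  next
    case False
    then obtain k where "odd k" "uv = 2*k"
      unfolding uv_def by (rule uv_twice_odd_if_odd)
    moreover have "odd w"
      using False by (simp add: w_def)
    ultimately show ?thesis
      using twice_odd [of k] twice_odd [of "w*k"] by (simp add: mult.left_commute)
  qed
  then show "\<not> is_square uv" "\<not> is_square (-uv)" "\<not> is_square (w*uv)" "\<not> is_square (-(w*uv))"
    by blast+
qed

section \<open>Square classes\<close>

lemma all_less_eight:
  "(\<forall>i<(8::nat). Q i) \<longleftrightarrow> Q 0 \<and> Q 1 \<and> Q 2 \<and> Q 3 \<and> Q 4 \<and> Q 5 \<and> Q 6 \<and> Q 7"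
  by (simp add: eval_nat_numeral less_Suc_eq all_conj_distrib)

lemma same_sq_class_imp_square_mult:
  assumes "same_sq_class x y"
  shows "is_square (x * y)"
proof -
  obtain q where "y \<noteq> 0" "x / y = q^2"
    using assms by (auto simp: same_sq_class_def)
  then have "x * y = (q * y)^2"
    by (simp add: field_simps power2_eq_square)
  then show ?thesis
    by (rule is_nth_powerI)
qed

lemma not_square_mult_square:
  fixes c x :: "'a::field"
  assumes "c \<noteq> 0" "\<not> is_square x"
  shows "\<not> is_square (c^2 * x)"
proof
  assume "is_square (c^2 * x)"
  then obtain t where "c^2 * x = t^2"
    unfolding is_nth_power_def by metis
  then have "x = (t / c)^2"
    using \<open>c \<noteq> 0\<close> by (simp add: field_simps power_divide)
  with assms(2) show False
    by (auto intro: is_nth_powerI)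
qed

lemma not_square_neg_square:
  fixes x :: "'a::linordered_field"
  assumes "x \<noteq> 0"
  shows "\<not> is_square (-(x^2))"
proof
  assume "is_square (-(x^2))"
  then obtain t where "-(x^2) = t^2"
    unfolding is_nth_power_def by metis
  moreover have "x^2 > 0"
    using assms by simp
  ultimately show False
    by (metis neg_less_0_iff_less not_less zero_le_power2)
qed

lemma eight_square_classes_distinct:
  fixes P w :: rat
  assumes "\<not> is_square P" "\<not> is_square (-P)" "\<not> is_square w" "\<not> is_square (-w)"
    "\<not> is_square (P*w)" "\<not> is_square (-(P*w))"
  defines "L \<equiv> [1, -1, P*w, -(P*w), P, -P, w, -w]"
  shows "\<forall>i<8. \<forall>j<8. i \<noteq> j \<longrightarrow> \<not> same_sq_class (L!i) (L!j)"
proof -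
  have "P \<noteq> 0" "w \<noteq> 0"
    using assms(1,3) by auto
  then have "\<not> is_square (-1 :: rat)" "\<not> is_square (-(P^2))" "\<not> is_square (-(w^2))"
    "\<not> is_square (-((P*w)^2))"
    using not_square_neg_square [of "1::rat"] not_square_neg_square [of P]
      not_square_neg_square [of w] not_square_neg_square [of "P*w"] by simp_all
  moreover have "\<not> is_square (P^2 * w)" "\<not> is_square (P^2 * -w)"
    "\<not> is_square (w^2 * P)" "\<not> is_square (w^2 * -P)"
    using not_square_mult_square [OF \<open>P \<noteq> 0\<close> assms(3)] not_square_mult_square [OF \<open>P \<noteq> 0\<close> assms(4)]
      not_square_mult_square [OF \<open>w \<noteq> 0\<close> assms(1)] not_square_mult_square [OF \<open>w \<noteq> 0\<close> assms(2)]
    by blast+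
  ultimately have "\<forall>i<8. \<forall>j<8. i \<noteq> j \<longrightarrow> \<not> is_square (L!i * L!j)"
    \<comment> \<open>up to a nonzero square factor, every product of two distinct entries is one of the
      non-squares above; the simplifier normalises both sides to the same AC form\<close>
    using assms(1-6) unfolding L_def all_less_eight
    by (simp add: power2_eq_square mult_ac)
  then show ?thesis
    using same_sq_class_imp_square_mult by blast
qed

lemma eight_distinct_classes_if_coprime:
  fixes r s :: int
  assumes "coprime r s" "r \<noteq> 0"
  shows "eight_distinct_classes r s"
proof -
  define uv W where "uv = (r^2 + s^2) * (2*r^2 - s^2)" and "W = 3*(2*s^2 - r^2)"
  define P w :: rat where "P = of_int uv" and "w = of_int r ^ 2 * of_int W"
  have "sq_u r s * sq_v r s = uv"
    by (simp add: sq_u_def sq_v_def uv_def)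
  moreover have "sq_u r s ^ 2 - sq_v r s ^ 2 = r^2 * W"
    unfolding sq_u_def sq_v_def W_def by algebra
  ultimately have "eight_list r s = map of_int [1, -1, uv * (r^2 * W), -(uv * (r^2 * W)), uv, -uv, r^2 * W, -(r^2 * W)]"
    by (simp only: eight_list_def sq_A_def Let_def)
  then have L: "eight_list r s = [1, -1, P*w, -(P*w), P, -P, w, -w]"
    by (simp add: P_def w_def)
  have rat: "\<not> is_square (of_int n :: rat)" if "\<not> is_square n" for n
    using that is_square_of_int_ratD by blast
  have r: "(of_int r :: rat) \<noteq> 0"
    using assms(2) by simp
  note ns = integer_nonsquares [OF assms, folded uv_def W_def]
  have nP: "\<not> is_square P" "\<not> is_square (-P)"
    using rat [OF ns(1)] rat [OF ns(2)] by (simp_all add: P_def)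
  have nw: "\<not> is_square w" "\<not> is_square (-w)"
    using not_square_mult_square [OF r rat [OF ns(3)]] not_square_mult_square [OF r rat [OF ns(4)]]
    by (simp_all add: w_def)
  have nPw: "\<not> is_square (P*w)" "\<not> is_square (-(P*w))"
    using not_square_mult_square [OF r rat [OF ns(5)]] not_square_mult_square [OF r rat [OF ns(6)]]
    by (simp_all add: P_def w_def mult_ac)
  have "P \<noteq> 0" "w \<noteq> 0"
    using nP(1) nw(1) by auto
  moreover have "\<forall>i<8. \<forall>j<8. i \<noteq> j \<longrightarrow> \<not> same_sq_class (eight_list r s ! i) (eight_list r s ! j)"
    unfolding L using nP nw nPw by (rule eight_square_classes_distinct)
  ultimately show ?thesis
    unfolding eight_distinct_classes_def by (simp add: L all_less_eight)
qed

theorem lemma6p1: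
  shows "finite {(r :: int, s :: int). coprime r s \<and> r \<noteq> 0 \<and> \<not> eight_distinct_classes r s}"
proof -
  have "{(r :: int, s :: int). coprime r s \<and> r \<noteq> 0 \<and> \<not> eight_distinct_classes r s} = {}"
    using eight_distinct_classes_if_coprime by auto
  then show ?thesis
    by (metis finite.emptyI)
qed

end
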